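(* Let $\alpha<1$ be a real number and $k\ge 2$ an integer. Let $A\subset\mathbb{N}$ be such that $A(X)\le C\frac{\sqrt{X}}{(\log X)^{\alpha}}$ for some constant $C>0$ and all sufficiently large $X$. Then there is a constant $C'>0$ such that for all sufficiently large $X$, $$A^k(X)\le C'\sqrt{X}(\log X)^{k-1-k\alpha}.$$
   Context: $\mathbb{N}$ is the set of positive integers; $A^1=A$, $A^k=AA^{k-1}$ where $AB=\{ab:a\in A,b\in B\}$; for $S\subset\mathbb{N}_0$, $S(X)=|S\cap[1,X]|$. *)

theory Defs
  imports Complex_Main
begin

definition set_mult :: "nat set \<Rightarrow> nat set \<Rightarrow> nat set" where
  "set_mult A B = {a * b | a b. a \<in> A \<and> b \<in> B}"

fun set_pow :: "nat set \<Rightarrow> nat \<Rightarrow> nat set" where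
  "set_pow A 0 = {1}"
| "set_pow A (Suc k) = set_mult A (set_pow A k)"

definition count_upto :: "nat set \<Rightarrow> real \<Rightarrow> nat" where
  "count_upto S X = card {n \<in> S. 1 \<le> n \<and> real n \<le> X}"

end

theory Submission
  imports Defs "HOL-Library.Discrete_Functions"
begin

text \<open>
  Grouping A into dyadic blocks [2^y, 2^(y+1)) and summing the hypothesis over the blocks gives
  \<Sum>{a^(-1/2) | a \<in> A, a \<le> X} = O((log X)^(1-\<alpha>)). This sum is submultiplicative under products
  of sets, so the corresponding sum over A^j is O((log X)^(j(1-\<alpha>))).
  Every n \<in> A^(j+1) factors as n = a m with a \<in> A, m \<in> A^j and m \<le> a^j (take a to be the largest
  factor); for n \<le> X this gives m^(j+1) \<le> X^j, i.e. X/m \<ge> X^(1/(j+1)), so log (X/m) and log X are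
  comparable. Hence A^(j+1)(X) \<le> \<Sum>{A(X/m) | m \<in> A^j, m^(j+1) \<le> X^j}
  = O(\<surd>X (log X)^(-\<alpha>) \<Sum>{m^(-1/2) | m \<in> A^j, m \<le> X}).
\<close>


definition members_upto :: "nat set \<Rightarrow> real \<Rightarrow> nat set" where
  "members_upto S X = {n \<in> S. 1 \<le> n \<and> real n \<le> X}"

definition inv_sqrt_sum :: "nat set \<Rightarrow> real \<Rightarrow> real" where
  "inv_sqrt_sum S X = (\<Sum>n\<in>members_upto S X. 1 / sqrt (real n))"

lemma count_upto_eq_card: "count_upto S X = card (members_upto S X)"
  by (simp add: count_upto_def members_upto_def)

lemma finite_members_upto [simp]: "finite (members_upto S X)"
proof (rule finite_subset)
  show "members_upto S X \<subseteq> {..nat \<lfloor>X\<rfloor>}"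
    by (auto simp: members_upto_def le_nat_floor)
qed simp

lemma inv_sqrt_sum_nonneg: "inv_sqrt_sum S X \<ge> 0"
  by (simp add: inv_sqrt_sum_def sum_nonneg)

lemma sum_powr_neg_le_div:
  fixes \<alpha> :: real
  assumes "0 \<le> \<alpha>" "\<alpha> < 1"
  shows "(\<Sum>i<J. real (i+1) powr (-\<alpha>)) \<le> real J powr (1-\<alpha>) / (1-\<alpha>)"
proof (induction J)
  case (Suc J)
  have "real (J+1) powr (-\<alpha>) \<le> (real (J+1) powr (1-\<alpha>) - real J powr (1-\<alpha>)) / (1-\<alpha>)"
  proof (cases "J = 0")
    case False
    have "\<exists>z>real J. z < real (J+1) \<and>
      real (J+1) powr (1-\<alpha>) - real J powr (1-\<alpha>)
        = (real (J+1) - real J) * ((1-\<alpha>) * z powr (1-\<alpha>-1))"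
      by (intro MVT2 has_real_derivative_powr) (use False in auto)
    then obtain z where z: "real J < z" "z < real (J+1)"
      "real (J+1) powr (1-\<alpha>) - real J powr (1-\<alpha>) = (1-\<alpha>) * z powr (-\<alpha>)"
      by auto
    have "real (J+1) powr (-\<alpha>) \<le> z powr (-\<alpha>)"
      using z False assms by (intro powr_mono2') auto
    then show ?thesis
      using z assms by (simp add: pos_le_divide_eq mult.commute)
  qed (use assms in simp)
  with Suc show ?case
    by (simp add: diff_divide_distrib)
qed simp

lemma sum_powr_neg_le:
  fixes \<alpha> :: real
  assumes "\<alpha> < 1"
  obtains c where "c > 0" "\<And>J. (\<Sum>i<J. real (i+1) powr (-\<alpha>)) \<le> c * real J powr (1-\<alpha>)"
proof (cases "0 \<le> \<alpha>")
  case True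
  then show ?thesis
    using that[of "1/(1-\<alpha>)"] sum_powr_neg_le_div[OF True assms] assms by auto
next
  case False
  have "(\<Sum>i<J. real (i+1) powr (-\<alpha>)) \<le> real J powr (1-\<alpha>)" for J
  proof -
    have "(\<Sum>i<J. real (i+1) powr (-\<alpha>)) \<le> (\<Sum>i<J. real J powr (-\<alpha>))"
      using False by (intro sum_mono powr_mono2) auto
    also have "\<dots> = real J powr (1-\<alpha>)"
      by (cases "J = 0") (simp_all add: powr_diff powr_minus_divide)
    finally show ?thesis .
  qed
  then show ?thesis using that[of 1] by simp
qed

lemma eventually_le_imp_uniform_le:
  fixes f g :: "nat \<Rightarrow> real"
  assumes "eventually (\<lambda>n. f n \<le> c * g n) sequentially" and g: "\<And>n. g n > 0"
  obtains E where "E \<ge> 0" "\<And>n. f n \<le> E * g n"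
proof -
  obtain N where N: "\<And>n. n \<ge> N \<Longrightarrow> f n \<le> c * g n"
    using assms(1) by (auto simp: eventually_sequentially)
  define E where "E = max (max c 0) (Max ((\<lambda>n. f n / g n) ` {..N}))"
  have "f n \<le> E * g n" for n
  proof (cases "n \<le> N")
    case True
    then have "f n / g n \<le> E"
      unfolding E_def by (intro max.coboundedI2 Max_ge) auto
    then show ?thesis using g[of n] by (simp add: divide_le_eq)
  next
    case False
    then have "f n \<le> c * g n" using N by simp
    also have "\<dots> \<le> E * g n"
      using g[of n] unfolding E_def by (intro mult_right_mono) auto
    finally show ?thesis .
  qed
  then show ?thesis using that[of E] by (simp add: E_def)
qed

lemma dyadic_count_bound:
  fixes A :: "nat set" and C \<alpha> :: real
  assumes "\<forall>\<^sub>F Y in at_top. real (count_upto A Y) \<le> C * sqrt Y / ln Y powr \<alpha>"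
  obtains E where "E \<ge> 0"
    "\<And>y. real (count_upto A (2^(y+1))) / sqrt (2^y) \<le> E * real (y+1) powr (-\<alpha>)"
proof (rule eventually_le_imp_uniform_le)
  obtain Y0 where Y0: "\<And>Y. Y \<ge> Y0 \<Longrightarrow> real (count_upto A Y) \<le> C * sqrt Y / ln Y powr \<alpha>"
    using assms by (auto simp: eventually_at_top_linorder)
  show "eventually (\<lambda>y. real (count_upto A (2^(y+1))) / sqrt (2^y)
          \<le> (C * sqrt 2 * ln 2 powr (-\<alpha>)) * real (y+1) powr (-\<alpha>)) sequentially"
  proof (rule eventually_sequentiallyI)
    fix y :: nat
    assume "y \<ge> nat \<lceil>Y0\<rceil>"
    moreover have "real (y+1) < 2^(y+1)"
      using less_exp[of "y+1"] by (metis of_nat_less_numeral_power_cancel_iff)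
    ultimately have "Y0 \<le> 2^(y+1)"
      using real_nat_ceiling_ge[of Y0] by linarith
    then have "real (count_upto A (2^(y+1))) \<le> C * sqrt (2^(y+1)) / ln (2^(y+1)) powr \<alpha>"
      using Y0 by blast
    also have "ln ((2::real)^(y+1)) powr \<alpha> = real (y+1) powr \<alpha> * ln 2 powr \<alpha>"
      by (simp add: ln_realpow powr_mult del: power_Suc)
    finally show "real (count_upto A (2^(y+1))) / sqrt (2^y)
          \<le> (C * sqrt 2 * ln 2 powr (-\<alpha>)) * real (y+1) powr (-\<alpha>)"
      by (simp add: real_sqrt_mult powr_minus_divide field_simps)
  qed
qed auto

lemma inv_sqrt_sum_dyadic_block:
  "(\<Sum>n\<in>{n\<in>members_upto A X. floor_log n = y}. 1 / sqrt (real n))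
     \<le> real (count_upto A (2^(y+1))) / sqrt (2^y)"
proof -
  let ?B = "{n\<in>members_upto A X. floor_log n = y}"
  have "(\<Sum>n\<in>?B. 1 / sqrt (real n)) \<le> real (card ?B) * (1 / sqrt (2^y))"
  proof (rule sum_bounded_above)
    fix n assume n: "n \<in> ?B"
    then have "2 ^ y \<le> n"
      using floor_log_exp2_le[of n] by (auto simp: members_upto_def)
    then have "(2::real) ^ y \<le> real n"
      by (metis numeral_power_le_of_nat_cancel_iff)
    moreover have "(0::real) < 2 ^ y" by simp
    ultimately show "1 / sqrt (real n) \<le> 1 / sqrt (2^y)"
      by (intro divide_left_mono real_sqrt_le_mono mult_pos_pos real_sqrt_gt_zero)
        (auto intro: order.strict_trans2[of 0 "2^y"])
  qed
  also have "card ?B \<le> count_upto A (2^(y+1))"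
  proof -
    have "real n \<le> 2^(y+1)" if "n \<in> ?B" for n
    proof -
      have "n \<le> 2^(y+1)"
        using that floor_log_exp2_gt[of n] by auto
      then show ?thesis
        by (metis of_nat_le_iff of_nat_numeral of_nat_power)
    qed
    then have "?B \<subseteq> members_upto A (2^(y+1))"
      by (auto simp: members_upto_def)
    then show ?thesis
      unfolding count_upto_eq_card by (intro card_mono) auto
  qed
  finally show ?thesis by (simp add: divide_right_mono)
qed

lemma Suc_floor_log_le_ln:
  assumes "X \<ge> 2"
  shows "real (Suc (floor_log (nat \<lfloor>X\<rfloor>))) \<le> 2 / ln 2 * ln X"
proof -
  let ?N = "nat \<lfloor>X\<rfloor>"
  have "real (2 ^ floor_log ?N) \<le> real ?N"
    using floor_log_exp2_le[of ?N] assms by linarith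
  also have "real ?N \<le> X"
    using assms by linarith
  finally have "ln ((2::real) ^ floor_log ?N) \<le> ln X"
    using assms by simp
  then have "real (floor_log ?N) * ln 2 \<le> ln X"
    by (simp add: ln_realpow)
  moreover have "ln 2 \<le> ln X"
    using assms by simp
  ultimately show ?thesis
    by (simp add: field_simps)
qed

lemma inv_sqrt_sum_le_ln_powr:
  fixes A :: "nat set" and C \<alpha> :: real
  assumes "\<alpha> < 1"
    and "\<forall>\<^sub>F Y in at_top. real (count_upto A Y) \<le> C * sqrt Y / ln Y powr \<alpha>"
  obtains D where "D > 0" "\<And>X. X \<ge> 2 \<Longrightarrow> inv_sqrt_sum A X \<le> D * ln X powr (1-\<alpha>)"
proof -
  obtain E where E: "E \<ge> 0"
    "\<And>y. real (count_upto A (2^(y+1))) / sqrt (2^y) \<le> E * real (y+1) powr (-\<alpha>)"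
    using dyadic_count_bound[OF assms(2)] by blast
  obtain c where c: "c > 0" "\<And>J. (\<Sum>i<J. real (i+1) powr (-\<alpha>)) \<le> c * real J powr (1-\<alpha>)"
    using sum_powr_neg_le[OF assms(1)] by blast
  define D where "D = E * c * (2 / ln 2) powr (1-\<alpha>) + 1"
  have "inv_sqrt_sum A X \<le> D * ln X powr (1-\<alpha>)" if X: "X \<ge> 2" for X
  proof -
    define L where "L = Suc (floor_log (nat \<lfloor>X\<rfloor>))"
    have "floor_log ` members_upto A X \<subseteq> {..<L}"
      using floor_log_mono by (auto simp: L_def members_upto_def le_nat_floor less_Suc_eq_le mono_def)
    then have "inv_sqrt_sum A X
        = (\<Sum>y<L. \<Sum>n\<in>{n\<in>members_upto A X. floor_log n = y}. 1 / sqrt (real n))"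
      unfolding inv_sqrt_sum_def by (subst sum.group) auto
    also have "\<dots> \<le> (\<Sum>y<L. E * real (y+1) powr (-\<alpha>))"
      by (intro sum_mono order.trans[OF inv_sqrt_sum_dyadic_block E(2)])
    also have "\<dots> \<le> E * (c * real L powr (1-\<alpha>))"
      using c E by (simp add: sum_distrib_left[symmetric] mult_left_mono)
    also have "\<dots> \<le> E * (c * (2 / ln 2 * ln X) powr (1-\<alpha>))"
      using c E assms(1) Suc_floor_log_le_ln[OF X]
      by (intro mult_left_mono powr_mono2) (auto simp: L_def)
    also have "\<dots> = E * c * (2 / ln 2) powr (1-\<alpha>) * ln X powr (1-\<alpha>)"
      using X by (subst powr_mult) auto
    also have "\<dots> \<le> D * ln X powr (1-\<alpha>)"
      by (simp add: D_def mult_right_mono)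
    finally show ?thesis .
  qed
  moreover have "D > 0"
    using E c by (simp add: D_def add_nonneg_pos)
  ultimately show ?thesis using that by blast
qed

lemma inv_sqrt_sum_set_mult_le:
  "inv_sqrt_sum (set_mult A B) X \<le> inv_sqrt_sum A X * inv_sqrt_sum B X"
proof -
  let ?f = "\<lambda>n::nat. 1 / sqrt (real n)"
  have "members_upto (set_mult A B) X \<subseteq> (\<lambda>(a,b). a * b) ` (members_upto A X \<times> members_upto B X)"
  proof
    fix n assume "n \<in> members_upto (set_mult A B) X"
    then obtain a b where ab: "a \<in> A" "b \<in> B" "n = a * b" "1 \<le> n" "real n \<le> X"
      by (auto simp: members_upto_def set_mult_def)
    then have "a \<le> n" "b \<le> n" "1 \<le> a" "1 \<le> b"
      by (auto simp: Suc_le_eq)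
    moreover from this have "real a \<le> X" "real b \<le> X"
      using ab(5) by (meson of_nat_le_iff order_trans)+
    ultimately have "(a, b) \<in> members_upto A X \<times> members_upto B X"
      using ab by (auto simp: members_upto_def)
    then show "n \<in> (\<lambda>(a,b). a * b) ` (members_upto A X \<times> members_upto B X)"
      using ab by force
  qed
  then have "inv_sqrt_sum (set_mult A B) X
      \<le> sum ?f ((\<lambda>(a,b). a * b) ` (members_upto A X \<times> members_upto B X))"
    unfolding inv_sqrt_sum_def by (intro sum_mono2) auto
  also have "\<dots> \<le> (\<Sum>(a,b)\<in>members_upto A X \<times> members_upto B X. ?f (a * b))"
    by (rule order.trans[OF sum_image_le]) (auto simp: case_prod_beta)
  also have "\<dots> = inv_sqrt_sum A X * inv_sqrt_sum B X"
    by (simp add: inv_sqrt_sum_def sum_product sum.cartesian_product real_sqrt_mult)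
  finally show ?thesis .
qed

lemma inv_sqrt_sum_set_pow_le: "inv_sqrt_sum (set_pow A j) X \<le> inv_sqrt_sum A X ^ j"
proof (induction j)
  case 0
  have "members_upto {1} X \<subseteq> {1}"
    by (auto simp: members_upto_def)
  then have "inv_sqrt_sum {1} X \<le> (\<Sum>n\<in>{1}. 1 / sqrt (real n))"
    unfolding inv_sqrt_sum_def by (intro sum_mono2) auto
  then show ?case by simp
next
  case (Suc j)
  then show ?case
    using inv_sqrt_sum_set_mult_le[of A "set_pow A j" X] inv_sqrt_sum_nonneg[of A X]
    by (auto intro: order.trans mult_left_mono)
qed

lemma set_pow_Suc_largest_factor:
  "n \<in> set_pow A (Suc j) \<Longrightarrow> \<exists>a\<in>A. \<exists>m\<in>set_pow A j. n = a * m \<and> m \<le> a ^ j"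
proof (induction j arbitrary: n)
  case 0
  then show ?case by (auto simp: set_mult_def)
next
  case (Suc j)
  from Suc.prems obtain b n' where b: "b \<in> A" "n' \<in> set_pow A (Suc j)" "n = b * n'"
    by (auto simp: set_mult_def)
  from Suc.IH[OF b(2)] obtain a m where am: "a \<in> A" "m \<in> set_pow A j" "n' = a * m" "m \<le> a ^ j"
    by blast
  show ?case
  proof (cases "b \<le> a")
    case True
    have "b * m \<in> set_pow A (Suc j)" "b * m \<le> a ^ Suc j"
      using True am b(1) by (auto simp: set_mult_def mult_le_mono)
    then show ?thesis using am b by (intro bexI[of _ a] bexI[of _ "b * m"]) auto
  next
    case False
    have "a * m \<le> a * a ^ j" using am(4) by simp
    also have "\<dots> \<le> b * b ^ j" using False by (intro mult_le_mono power_mono) auto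
    finally have "a * m \<le> b ^ Suc j" by simp
    moreover have "a * m \<in> set_pow A (Suc j)"
      using am by (auto simp: set_mult_def)
    ultimately show ?thesis using am b by (intro bexI[of _ b] bexI[of _ "a * m"]) auto
  qed
qed

lemma count_set_pow_Suc_le_sum:
  "real (count_upto (set_pow A (Suc j)) X)
     \<le> (\<Sum>m\<in>{m\<in>members_upto (set_pow A j) X. real m ^ Suc j \<le> X ^ j}.
          real (count_upto A (X / real m)))"
proof -
  define M where "M = {m\<in>members_upto (set_pow A j) X. real m ^ Suc j \<le> X ^ j}"
  define P where "P m = members_upto A (X / real m)" for m :: nat
  have sub: "members_upto (set_pow A (Suc j)) X \<subseteq> (\<lambda>(m,a). a * m) ` Sigma M P"
  proof
    fix n assume "n \<in> members_upto (set_pow A (Suc j)) X"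
    then have n: "n \<in> set_pow A (Suc j)" "1 \<le> n" "real n \<le> X"
      by (auto simp: members_upto_def)
    obtain a m where am: "a \<in> A" "m \<in> set_pow A j" "n = a * m" "m \<le> a ^ j"
      using set_pow_Suc_largest_factor[OF n(1)] by blast
    then have "1 \<le> a" "1 \<le> m" "m \<le> n"
      using n(2) by (auto simp: Suc_le_eq)
    have "m ^ Suc j \<le> n ^ j"
      using am(3,4) by (simp add: power_mult_distrib mult.commute)
    then have "real m ^ Suc j \<le> real n ^ j"
      by (metis of_nat_le_iff of_nat_power)
    also have "\<dots> \<le> X ^ j"
      using n by (intro power_mono) auto
    moreover have "real m \<le> X"
      using \<open>m \<le> n\<close> n(3) by (meson of_nat_le_iff order_trans)
    ultimately have "m \<in> M"
      using am \<open>1 \<le> m\<close> by (auto simp: M_def members_upto_def)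
    moreover have "a \<in> P m"
      using am n \<open>1 \<le> a\<close> \<open>1 \<le> m\<close> by (auto simp: P_def members_upto_def field_simps)
    ultimately show "n \<in> (\<lambda>(m,a). a * m) ` Sigma M P"
      using am(3) by force
  qed
  have fin: "finite (Sigma M P)"
    by (auto simp: M_def P_def)
  have "count_upto (set_pow A (Suc j)) X \<le> card ((\<lambda>(m,a). a * m) ` Sigma M P)"
    unfolding count_upto_eq_card by (intro card_mono finite_imageI fin sub)
  also have "\<dots> \<le> card (Sigma M P)"
    by (rule card_image_le[OF fin])
  also have "\<dots> = (\<Sum>m\<in>M. count_upto A (X / real m))"
    by (simp add: M_def P_def count_upto_eq_card)
  finally show ?thesis
    unfolding M_def of_nat_sum[symmetric] of_nat_le_iff .
qed

lemma ln_powr_le_of_le_power: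
  fixes X Y \<alpha> :: real
  assumes "1 < Y" "Y \<le> X" "X \<le> Y ^ k"
  shows "ln X powr \<alpha> \<le> max 1 (real k powr \<alpha>) * ln Y powr \<alpha>"
proof (cases "\<alpha> \<ge> 0")
  case True
  have "ln X \<le> real k * ln Y"
    using assms ln_mono[OF assms(3)] by (simp add: ln_realpow)
  then have "ln X powr \<alpha> \<le> (real k * ln Y) powr \<alpha>"
    using True assms by (intro powr_mono2) auto
  also have "\<dots> = real k powr \<alpha> * ln Y powr \<alpha>"
    using assms by (simp add: powr_mult)
  also have "\<dots> \<le> max 1 (real k powr \<alpha>) * ln Y powr \<alpha>"
    by (intro mult_right_mono) auto
  finally show ?thesis .
next
  case False
  then have "ln X powr \<alpha> \<le> ln Y powr \<alpha>"
    using assms by (intro powr_mono2') auto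
  also have "\<dots> \<le> max 1 (real k powr \<alpha>) * ln Y powr \<alpha>"
    by (simp add: mult_le_cancel_right1)
  finally show ?thesis .
qed

lemma count_set_pow_Suc_le_inv_sqrt_sum:
  fixes A :: "nat set" and C \<alpha> X X1 :: real
  assumes C: "C \<ge> 0" and X1: "1 < X1"
    and bound: "\<And>Y. Y \<ge> X1 \<Longrightarrow> real (count_upto A Y) \<le> C * sqrt Y / ln Y powr \<alpha>"
    and X: "X1 ^ Suc j \<le> X"
  shows "real (count_upto (set_pow A (Suc j)) X)
    \<le> C * max 1 (real (Suc j) powr \<alpha>) * sqrt X / ln X powr \<alpha> * inv_sqrt_sum (set_pow A j) X"
proof -
  define Q where "Q = C * max 1 (real (Suc j) powr \<alpha>) * sqrt X / ln X powr \<alpha>"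
  have "X1 \<le> X1 ^ Suc j"
    using X1 by (simp add: power_increasing[of 1 "Suc j" X1, simplified])
  with X X1 have X_gt1: "1 < X" by linarith
  have Q_nonneg: "Q \<ge> 0"
    using C X_gt1 by (simp add: Q_def)
  define M where "M = {m\<in>members_upto (set_pow A j) X. real m ^ Suc j \<le> X ^ j}"
  have "real (count_upto A (X / real m)) \<le> Q * (1 / sqrt (real m))" if "m \<in> M" for m
  proof -
    define Y where "Y = X / real m"
    have m: "1 \<le> real m" "real m \<le> X" "real m ^ Suc j \<le> X ^ j"
      using that by (auto simp: M_def members_upto_def)
    have "X = X ^ Suc j / X ^ j"
      using X_gt1 by simp
    also have "\<dots> \<le> X ^ Suc j / real m ^ Suc j"
      using m X_gt1 by (intro divide_left_mono) auto
    also have "\<dots> = Y ^ Suc j"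
      by (simp add: Y_def power_divide)
    finally have "X \<le> Y ^ Suc j" .
    moreover have Y_nonneg: "0 \<le> Y"
      using m X_gt1 by (simp add: Y_def)
    ultimately have "X1 \<le> Y"
      using X power_le_imp_le_base[of X1 j Y] by linarith
    moreover have "Y \<le> X"
      using m X_gt1 by (simp add: Y_def field_simps)
    ultimately have "ln X powr \<alpha> \<le> max 1 (real (Suc j) powr \<alpha>) * ln Y powr \<alpha>"
      using X1 \<open>X \<le> Y ^ Suc j\<close> by (intro ln_powr_le_of_le_power) auto
    moreover have "0 < ln Y powr \<alpha>" "0 < ln X powr \<alpha>"
      using X1 \<open>X1 \<le> Y\<close> X_gt1 by auto
    ultimately have "C * sqrt Y / ln Y powr \<alpha>
        \<le> C * sqrt Y * max 1 (real (Suc j) powr \<alpha>) / ln X powr \<alpha>"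
      using C Y_nonneg by (simp add: divide_simps mult_left_mono mult.assoc)
    also have "\<dots> = Q * (1 / sqrt (real m))"
      by (simp add: Q_def Y_def real_sqrt_divide mult_ac)
    finally have "C * sqrt Y / ln Y powr \<alpha> \<le> Q * (1 / sqrt (real m))" .
    then show ?thesis
      using bound[OF \<open>X1 \<le> Y\<close>] by (simp add: Y_def)
  qed
  then have "(\<Sum>m\<in>M. real (count_upto A (X / real m))) \<le> (\<Sum>m\<in>M. Q * (1 / sqrt (real m)))"
    by (rule sum_mono)
  then have "real (count_upto (set_pow A (Suc j)) X) \<le> (\<Sum>m\<in>M. Q * (1 / sqrt (real m)))"
    using count_set_pow_Suc_le_sum[of A j X] unfolding M_def by linarith
  also have "\<dots> \<le> Q * inv_sqrt_sum (set_pow A j) X"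
    using Q_nonneg unfolding sum_distrib_left[symmetric] inv_sqrt_sum_def M_def
    by (intro mult_left_mono sum_mono2) auto
  finally show ?thesis unfolding Q_def .
qed

lemma count_set_pow_Suc_le_ln_powr:
  fixes A :: "nat set" and C D \<alpha> X X1 :: real
  assumes "C \<ge> 0" and "1 < X1"
    and "\<And>Y. Y \<ge> X1 \<Longrightarrow> real (count_upto A Y) \<le> C * sqrt Y / ln Y powr \<alpha>"
    and X: "X1 ^ Suc j \<le> X" and D: "inv_sqrt_sum A X \<le> D * ln X powr (1-\<alpha>)"
  shows "real (count_upto (set_pow A (Suc j)) X)
    \<le> C * max 1 (real (Suc j) powr \<alpha>) * D ^ j * sqrt X
       * ln X powr (real (Suc j) - 1 - real (Suc j) * \<alpha>)"
proof -
  define Q where "Q = C * max 1 (real (Suc j) powr \<alpha>) * sqrt X / ln X powr \<alpha>"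
  have "X1 \<le> X1 ^ Suc j"
    using \<open>1 < X1\<close> by (simp add: power_increasing[of 1 "Suc j" X1, simplified])
  with X \<open>1 < X1\<close> have "1 < X" by linarith
  then have "0 \<le> Q"
    using \<open>C \<ge> 0\<close> by (simp add: Q_def)
  have "inv_sqrt_sum (set_pow A j) X \<le> inv_sqrt_sum A X ^ j"
    by (rule inv_sqrt_sum_set_pow_le)
  also have "\<dots> \<le> (D * ln X powr (1-\<alpha>)) ^ j"
    using D by (intro power_mono inv_sqrt_sum_nonneg)
  finally have "real (count_upto (set_pow A (Suc j)) X) \<le> Q * (D * ln X powr (1-\<alpha>)) ^ j"
    using count_set_pow_Suc_le_inv_sqrt_sum[OF assms(1-4)] \<open>0 \<le> Q\<close>
    unfolding Q_def[symmetric] by (meson mult_left_mono order_trans)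
  also have "\<dots> = C * max 1 (real (Suc j) powr \<alpha>) * D ^ j * sqrt X
      * ((ln X powr (1-\<alpha>)) ^ j / ln X powr \<alpha>)"
    by (simp add: Q_def power_mult_distrib)
  also have "(ln X powr (1-\<alpha>)) ^ j / ln X powr \<alpha> = ln X powr (real j * (1-\<alpha>) - \<alpha>)"
    using \<open>1 < X\<close> by (simp add: powr_power powr_diff[of _ "real j * (1-\<alpha>)" \<alpha>])
  also have "real j * (1-\<alpha>) - \<alpha> = real (Suc j) - 1 - real (Suc j) * \<alpha>"
    by (simp add: algebra_simps)
  finally show ?thesis .
qed

theorem corollary2p3:
  fixes A :: "nat set" and \<alpha> :: real and k :: nat
  assumes "\<alpha> < 1" and "k \<ge> 2" and "0 \<notin> A"
    and "\<exists>C>0. \<forall>\<^sub>F X in at_top.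
           real (count_upto A X) \<le> C * sqrt X / (ln X) powr \<alpha>"
  shows "\<exists>C'>0. \<forall>\<^sub>F X in at_top.
           real (count_upto (set_pow A k) X) \<le> C' * sqrt X * (ln X) powr (real k - 1 - real k * \<alpha>)"
proof -
  obtain C where "C > 0" and ev: "\<forall>\<^sub>F X in at_top. real (count_upto A X) \<le> C * sqrt X / ln X powr \<alpha>"
    using assms(4) by blast
  obtain D where "D > 0" and D: "\<And>X. X \<ge> 2 \<Longrightarrow> inv_sqrt_sum A X \<le> D * ln X powr (1-\<alpha>)"
    using inv_sqrt_sum_le_ln_powr[OF assms(1) ev] by blast
  obtain X0 where X0: "\<And>Y. Y \<ge> X0 \<Longrightarrow> real (count_upto A Y) \<le> C * sqrt Y / ln Y powr \<alpha>"
    using ev by (auto simp: eventually_at_top_linorder)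
  obtain j where k: "k = Suc j"
    using assms(2) by (cases k) auto
  have "\<forall>\<^sub>F X in at_top. real (count_upto (set_pow A k) X)
      \<le> (C * max 1 (real k powr \<alpha>) * D ^ j) * sqrt X * ln X powr (real k - 1 - real k * \<alpha>)"
    using eventually_ge_at_top[of "max 2 (max 2 X0 ^ k)"]
  proof eventually_elim
    case (elim X)
    then show ?case
      unfolding k using \<open>C > 0\<close> X0 D[of X]
      by (intro count_set_pow_Suc_le_ln_powr[of C "max 2 X0"]) (auto simp: k)
  qed
  then show ?thesis
    using \<open>C > 0\<close> \<open>D > 0\<close> by (intro exI[of _ "C * max 1 (real k powr \<alpha>) * D ^ j"]) auto
qed

end
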